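(* For any positive integer $r$, $\mathrm{NCQSym}^r(\mathbf{x})$ is a Hopf algebra, namely a Hopf subalgebra of $\mathrm{NCQSym}(\mathbf{x})$ with product and coproduct inherited from $\mathrm{NCQSym}(\mathbf{x})$.
   Context: Let $\mathbf{x}=\mathbf{x}_1,\mathbf{x}_2,\dots$ be noncommuting variables. A set composition $\Phi=(\Phi_1|\cdots|\Phi_k)$ of a finite set $A$ is an ordered list of disjoint nonempty sets with union $A$; a set partition $\Pi=\Pi_1/\cdots/\Pi_l$ is an unordered such collection. $\mathrm{NCQSym}(\mathbf{x})$ is the set of bounded-degree formal power series $f$ in $\mathbf{x}$ such that for every set composition $\Phi$ of $[n]$ all monomials $\mathbf{x}_{i_1}\cdots\mathbf{x}_{i_n}$ with $i_j=i_\ell$ whenever $j,\ell$ lie in the same block and $i_j<i_\ell$ whenever $j\in\Phi_p,\ell\in\Phi_q$, $p<q$, have the same coefficient. Its product is multiplication of series; its coproduct is: evaluate $f$ on the ordered alphabet $\mathbf{x}_1<\mathbf{x}_2<\cdots<\mathbf{y}_1<\mathbf{y}_2<\cdots$, impose $\mathbf{x}_i\mathbf{y}_j=\mathbf{y}_j\mathbf{x}_i$ for all $i,j$, view the result as $\sum f_1(\mathbf{x})\otimes f_2(\mathbf{y})\in\mathrm{NCQSym}(\mathbf{x})\otimes\mathrm{NCQSym}(\mathbf{y})$ and replace $\mathbf{y}$ by $\mathbf{x}$. For a positive integer $r$, an $r$-set-composition of $[n]$ is a pair $(\Phi,\Pi)$ where $\Phi$ is a set composition of some $A\subseteq[n]$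 all of whose blocks have size $\ge r$ and $\Pi$ is a set partition of $[n]\setminus A$ all of whose blocks have size $<r$. Define $\mathbf{M}_{(\Phi,\Pi)}=\sum\mathbf{x}_{i_1}\cdots\mathbf{x}_{i_n}$ over all tuples with $i_j=i_k$ if and only if $j,k$ lie in the same block of $\Phi$ or of $\Pi$, and $i_j<i_k$ whenever $j\in\Phi_l$, $k\in\Phi_m$, $l<m$. Let $\mathrm{NCQSym}^r_n(\mathbf{x})$ be the $\mathbb{Q}$-span of $\{\mathbf{M}_{(\Phi,\Pi)}\}$ over $r$-set-compositions of $[n]$, and $\mathrm{NCQSym}^r(\mathbf{x})=\bigoplus_{n\ge0}\mathrm{NCQSym}^r_n(\mathbf{x})$. *)

theory Defs
  imports Complex_Main "HOL-Library.Disjoint_Sets"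
begin

text \<open>Noncommuting variables x_0 < x_1 < x_2 < ... are indexed by natural numbers; a monomial
  x_{i_1} ... x_{i_n} is the word [i_1, ..., i_n]. A formal power series over the rationals is
  its coefficient function on words.\<close>

type_synonym series = "nat list \<Rightarrow> rat"

text \<open>Elements of the (algebraic) tensor square are viewed as coefficient functions on pairs of
  words: (u, v) stands for the monomial x_u tensor x_v.\<close>

type_synonym series2 = "nat list \<times> nat list \<Rightarrow> rat"

definition bounded_degree :: "series \<Rightarrow> bool" where
  "bounded_degree f \<longleftrightarrow> (\<exists>d. \<forall>w. d < length w \<longrightarrow> f w = 0)"

definition set_composition :: "nat set list \<Rightarrow> nat set \<Rightarrow> bool" where
  "set_composition Phi A \<longleftrightarrow> distinct Phi \<and> partition_on A (set Phi)"

definition r_set_composition :: "nat \<Rightarrow> nat \<Rightarrow> nat set list \<Rightarrow> nat set set \<Rightarrow> bool" where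
  "r_set_composition r n Phi P \<longleftrightarrow>
     (\<exists>A. A \<subseteq> {1..n} \<and> set_composition Phi A \<and> (\<forall>B\<in>set Phi. r \<le> card B)
          \<and> partition_on ({1..n} - A) P \<and> (\<forall>B\<in>P. card B < r))"

text \<open>The word w = x_{i_1}...x_{i_n} (position j carries the letter w ! (j - 1)) is a monomial of
  M_(Phi,P) (for a pair of [n]): equal letters exactly at positions in a common block of
  Phi or P, and increasing letters along the blocks of Phi.\<close>

definition fits :: "nat \<Rightarrow> nat set list \<Rightarrow> nat set set \<Rightarrow> nat list \<Rightarrow> bool" where
  "fits n Phi P w \<longleftrightarrow> length w = n
     \<and> (\<forall>j\<in>{1..n}. \<forall>k\<in>{1..n}.
          (w ! (j - 1) = w ! (k - 1)) \<longleftrightarrow> (\<exists>B \<in> set Phi \<union> P. j \<in> B \<and> k \<in> B))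
     \<and> (\<forall>l m j k. l < m \<and> m < length Phi \<and> j \<in> Phi ! l \<and> k \<in> Phi ! m
          \<longrightarrow> w ! (j - 1) < w ! (k - 1))"

definition M :: "nat \<Rightarrow> nat set list \<Rightarrow> nat set set \<Rightarrow> series" where
  "M n Phi P = (\<lambda>w. if fits n Phi P w then 1 else 0)"

definition NCQSym :: "series set" where
  "NCQSym = {f. bounded_degree f \<and>
     (\<forall>n Phi. set_composition Phi {1..n} \<longrightarrow>
        (\<forall>w w'. fits n Phi {} w \<and> fits n Phi {} w' \<longrightarrow> f w = f w'))}"

definition lin_span :: "('a \<Rightarrow> rat) set \<Rightarrow> ('a \<Rightarrow> rat) set" where
  "lin_span B = {f. \<exists>S c. finite S \<and> S \<subseteq> B \<and> f = (\<lambda>x. \<Sum>b\<in>S. c b * b x)}"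

definition NCQSym_r :: "nat \<Rightarrow> series set" where
  "NCQSym_r r = lin_span {M n Phi P | n Phi P. r_set_composition r n Phi P}"

definition smult :: "series \<Rightarrow> series \<Rightarrow> series" where
  "smult f g = (\<lambda>w. \<Sum>k\<le>length w. f (take k w) * g (drop k w))"

definition sone :: series where
  "sone = (\<lambda>w. if w = [] then 1 else 0)"

definition counit :: "series \<Rightarrow> rat" where
  "counit f = f []"

definition pack_by :: "('a \<Rightarrow> 'a \<Rightarrow> bool) \<Rightarrow> 'a list \<Rightarrow> nat list" where
  "pack_by lt w = map (\<lambda>a. card {b \<in> set w. lt b a}) w"

text \<open>The ordered alphabet x_0 < x_1 < ... < y_0 < y_1 < ...: Inl i is x_i, Inr j is y_j.\<close>

fun xy_less :: "nat + nat \<Rightarrow> nat + nat \<Rightarrow> bool" where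
  "xy_less (Inl i) (Inl j) = (i < j)"
| "xy_less (Inl i) (Inr j) = True"
| "xy_less (Inr i) (Inl j) = False"
| "xy_less (Inr i) (Inr j) = (i < j)"

text \<open>Coproduct: evaluate f (quasisymmetric, so coefficients depend only on the pattern of a word)
  on the alphabet x < y, let the x's commute with the y's (collect all interleavings of
  x_u and y_v), and replace y by x.\<close>

definition coprod :: "series \<Rightarrow> series2" where
  "coprod f = (\<lambda>(u, v). \<Sum>w\<in>shuffles (map Inl u) (map Inr v). f (pack_by xy_less w))"

definition tensor :: "series \<Rightarrow> series \<Rightarrow> series2" where
  "tensor f g = (\<lambda>(u, v). f u * g v)"

text \<open>Tensor product V \<otimes> W of subspaces, realised inside the functions on pairs of words.\<close>

definition tensor_space :: "series set \<Rightarrow> series set \<Rightarrow> series2 set" where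
  "tensor_space V W = lin_span {tensor f g | f g. f \<in> V \<and> g \<in> W}"

definition is_antipode_on :: "series set \<Rightarrow> (series \<Rightarrow> series) \<Rightarrow> bool" where
  "is_antipode_on H S \<longleftrightarrow>
     (\<forall>f\<in>H. S f \<in> H)
   \<and> (\<forall>f\<in>H. \<forall>g\<in>H. \<forall>c::rat. S (\<lambda>w. c * f w + g w) = (\<lambda>w. c * S f w + S g w))
   \<and> (\<forall>f\<in>H. \<forall>k::nat. \<forall>a b. (\<forall>i<k. a i \<in> H \<and> b i \<in> H) \<and>
          coprod f = (\<lambda>p. \<Sum>i<k. tensor (a i) (b i) p) \<longrightarrow>
          (\<lambda>w. \<Sum>i<k. smult (S (a i)) (b i) w) = (\<lambda>w. counit f * sone w)
        \<and> (\<lambda>w. \<Sum>i<k. smult (a i) (S (b i)) w) = (\<lambda>w. counit f * sone w))"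

end

theory Submission
  imports Defs "HOL-Library.Product_Lexorder" "HOL-Library.Multiset" "HOL-Library.Quotient_Product"
begin

text \<open>Call two words r-equivalent if one arises from the other by an injective relabelling of
  the letters that preserves the relative order of the letters occurring at least r times. The
  series M_(Phi,P) are exactly the indicator functions of the r-equivalence classes, so
  NCQSym^r consists of the bounded-degree series that are constant on r-equivalence classes.
  This description is stable under products, because prefixes and suffixes of r-equivalent
  words are r-equivalent, and under the coproduct, because relabelling the x-part and the
  y-part separately turns every shuffle into an r-equivalent one.

  The antipode is defined on all series by the recursion of a connected graded bialgebra,
  S(f)(w) = - (sum over k < |w| of S(f_k)(w_1...w_k)), where f_k is the left tensor factor of
  the coproduct of f paired with w_(k+1)...w_n. Coassociativity shows that it also solves the
  mirrored recursion, so it is a two-sided convolution inverse of the identity; by induction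
  on the length it preserves constancy on r-equivalence classes.\<close>

section \<open>Packing and shuffles\<close>

abbreviation pack :: "'a::linorder list \<Rightarrow> nat list" where
  "pack \<equiv> pack_by (<)"

lemma length_pack_by [simp]: "length (pack_by lt w) = length w"
  by (simp add: pack_by_def)

lemma pack_Nil [simp]: "pack_by lt [] = []"
  by (simp add: pack_by_def)

lemma pack_by_map:
  assumes "inj_on e (set t)" and "\<And>a b. a \<in> set t \<Longrightarrow> b \<in> set t \<Longrightarrow> lt' (e a) (e b) \<longleftrightarrow> lt a b"
  shows "pack_by lt' (map e t) = pack_by lt t"
proof -
  have "card {b \<in> e ` set t. lt' b (e a)} = card {b \<in> set t. lt b a}" if "a \<in> set t" for a
  proof -
    have "{b \<in> e ` set t. lt' b (e a)} = e ` {b \<in> set t. lt b a}"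
      using assms(2) that by auto
    also have "card \<dots> = card {b \<in> set t. lt b a}"
      by (rule card_image, rule inj_on_subset[OF assms(1)]) auto
    finally show ?thesis .
  qed
  then show ?thesis
    by (simp add: pack_by_def)
qed

lemma pack_map_strict_mono:
  fixes g :: "'a::linorder \<Rightarrow> 'b::linorder"
  assumes "strict_mono_on (set t) g"
  shows "pack (map g t) = pack t"
  using assms by (intro pack_by_map strict_mono_on_imp_inj_on) (auto simp: strict_mono_on_less)

lemma strict_mono_on_rank:
  fixes A :: "'a::linorder set"
  assumes "finite A"
  shows "strict_mono_on A (\<lambda>a. card {b \<in> A. b < a})"
  by (rule strict_mono_onI, rule psubset_card_mono) (use assms in auto)

lemma pack_eq_map_rank: "pack t = map (\<lambda>a. card {b \<in> set t. b < a}) t"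
  by (simp add: pack_by_def)

lemma pack_pack [simp]: "pack (pack t) = pack t"
  by (subst (2) pack_eq_map_rank) (simp add: pack_map_strict_mono strict_mono_on_rank)

lemma set_pack_subset: "set (pack t) \<subseteq> {..<length t}"
proof
  fix x assume "x \<in> set (pack t)"
  then obtain a where a: "a \<in> set t" "x = card {b \<in> set t. b < a}"
    by (auto simp: pack_by_def)
  have "card {b \<in> set t. b < a} < card (set t)"
    by (rule psubset_card_mono) (use a in auto)
  also have "\<dots> \<le> length t"
    by (rule card_length)
  finally show "x \<in> {..<length t}"
    using a by simp
qed

lemma sum_shuffles_map:
  assumes "inj_on g (set xs \<union> set ys)"
  shows "(\<Sum>t\<in>shuffles (map g xs) (map g ys). F t) = (\<Sum>t\<in>shuffles xs ys. F (map g t))"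
proof -
  have "shuffles (map g xs) (map g ys) = map g ` shuffles xs ys"
    by (induction xs ys rule: shuffles.induct) (auto simp: image_Un image_image)
  moreover have "inj_on (map g) (shuffles xs ys)"
    using assms by (auto intro!: inj_onI simp: inj_on_map_eq_map dest!: set_shuffles)
  ultimately show ?thesis
    by (simp add: sum.reindex)
qed

lemma sum_shuffles_pack_strict_mono:
  fixes g :: "'a::linorder \<Rightarrow> 'b::linorder"
  assumes "strict_mono_on (set xs \<union> set ys) g"
  shows "(\<Sum>t\<in>shuffles (map g xs) (map g ys). F (pack t)) = (\<Sum>t\<in>shuffles xs ys. F (pack t))"
proof -
  have "pack (map g t) = pack t" if "t \<in> shuffles xs ys" for t
    using assms set_shuffles[OF that] by (simp add: pack_map_strict_mono)
  then show ?thesis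
    by (simp add: sum_shuffles_map strict_mono_on_imp_inj_on[OF assms])
qed

lemma Cons_in_shuffles_iff':
  "a # t \<in> shuffles xs ys \<longleftrightarrow>
     (\<exists>xs'. xs = a # xs' \<and> t \<in> shuffles xs' ys) \<or> (\<exists>ys'. ys = a # ys' \<and> t \<in> shuffles xs ys')"
  by (cases xs; cases ys) (auto simp: Cons_in_shuffles_iff)

lemma in_shuffles_assoc:
  "(\<exists>z\<in>shuffles ys zs. t \<in> shuffles xs z) \<longleftrightarrow> (\<exists>x\<in>shuffles xs ys. t \<in> shuffles x zs)"
proof (induction t arbitrary: xs ys zs)
  case Nil
  then show ?case by auto
next
  case (Cons a t)
  have Cons_mem: "(\<exists>z\<in>S. \<exists>z'. z = a # z' \<and> Q z') \<longleftrightarrow> (\<exists>z'. a # z' \<in> S \<and> Q z')" for S Q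
    by blast
  have L: "(\<exists>z\<in>shuffles ys zs. a # t \<in> shuffles xs z) \<longleftrightarrow>
      (\<exists>xs'. xs = a # xs' \<and> (\<exists>z\<in>shuffles ys zs. t \<in> shuffles xs' z))
    \<or> (\<exists>ys'. ys = a # ys' \<and> (\<exists>z\<in>shuffles ys' zs. t \<in> shuffles xs z))
    \<or> (\<exists>zs'. zs = a # zs' \<and> (\<exists>z\<in>shuffles ys zs'. t \<in> shuffles xs z))"
    by (simp add: Cons_in_shuffles_iff' bex_disj_distrib Cons_mem) blast
  have R: "(\<exists>x\<in>shuffles xs ys. a # t \<in> shuffles x zs) \<longleftrightarrow>
      (\<exists>xs'. xs = a # xs' \<and> (\<exists>x\<in>shuffles xs' ys. t \<in> shuffles x zs))
    \<or> (\<exists>ys'. ys = a # ys' \<and> (\<exists>x\<in>shuffles xs ys'. t \<in> shuffles x zs))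
    \<or> (\<exists>zs'. zs = a # zs' \<and> (\<exists>x\<in>shuffles xs ys. t \<in> shuffles x zs'))"
    by (simp add: Cons_in_shuffles_iff' bex_disj_distrib Cons_mem) blast
  show ?case
    unfolding L R Cons.IH ..
qed

lemma sum_UN_shuffles:
  assumes "finite Z" and "\<And>z. z \<in> Z \<Longrightarrow> set xs \<inter> set z = {}"
  shows "(\<Sum>z\<in>Z. \<Sum>t\<in>shuffles xs z. G t) = sum G (\<Union>z\<in>Z. shuffles xs z)"
proof (rule sum.UNION_disjoint[symmetric])
  show "\<forall>z\<in>Z. \<forall>z'\<in>Z. z \<noteq> z' \<longrightarrow> shuffles xs z \<inter> shuffles xs z' = {}"
  proof (intro ballI impI equalityI subsetI)
    fix z z' t assume z: "z \<in> Z" "z' \<in> Z" "z \<noteq> z'" and t: "t \<in> shuffles xs z \<inter> shuffles xs z'"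
    have "filter (\<lambda>x. x \<notin> set xs) t = z" "filter (\<lambda>x. x \<notin> set xs) t = z'"
      using filter_shuffles_disjoint1(2)[OF assms(2)] z t by auto
    then show "t \<in> {}"
      using z(3) by simp
  qed simp
qed (use assms(1) in auto)

lemma sum_shuffles_assoc:
  assumes "set xs \<inter> set ys = {}" "set xs \<inter> set zs = {}" "set ys \<inter> set zs = {}"
  shows "(\<Sum>z\<in>shuffles ys zs. \<Sum>t\<in>shuffles xs z. G t) = (\<Sum>x\<in>shuffles xs ys. \<Sum>t\<in>shuffles x zs. G t)"
proof -
  have "(\<Sum>z\<in>shuffles ys zs. \<Sum>t\<in>shuffles xs z. G t) = sum G (\<Union>z\<in>shuffles ys zs. shuffles xs z)"
    using assms by (intro sum_UN_shuffles) (auto simp: set_shuffles)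
  also have "(\<Union>z\<in>shuffles ys zs. shuffles xs z) = (\<Union>x\<in>shuffles xs ys. shuffles x zs)"
    by (simp add: set_eq_iff in_shuffles_assoc)
  also have "\<dots> = (\<Union>x\<in>shuffles xs ys. shuffles zs x)"
    by (simp add: shuffles_commutes)
  also have "sum G \<dots> = (\<Sum>x\<in>shuffles xs ys. \<Sum>t\<in>shuffles zs x. G t)"
    using assms by (intro sum_UN_shuffles[symmetric]) (auto simp: set_shuffles)
  finally show ?thesis
    by (simp add: shuffles_commutes[of zs])
qed

section \<open>The coproduct on a tagged alphabet\<close>

abbreviation tag :: "nat \<Rightarrow> nat list \<Rightarrow> (nat \<times> nat) list" where
  "tag i \<equiv> map (Pair i)"

lemma pack_tag [simp]: "pack (tag i u) = pack u"
  by (rule pack_map_strict_mono) (auto intro: strict_mono_onI)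

lemma coprod_tagged: "coprod f (u, v) = (\<Sum>t\<in>shuffles (tag 0 u) (tag 1 v). f (pack t))"
proof -
  define e :: "nat \<times> nat \<Rightarrow> nat + nat" where "e p = (if fst p = 0 then Inl (snd p) else Inr (snd p))" for p
  have inj: "inj_on e (set (tag 0 u) \<union> set (tag 1 v))"
    by (auto simp: e_def inj_on_def)
  have "pack_by xy_less (map e t) = pack t" if "t \<in> shuffles (tag 0 u) (tag 1 v)" for t
    using set_shuffles[OF that] inj
    by (intro pack_by_map) (auto simp: e_def less_prod_def intro: inj_on_subset)
  moreover have map_e: "map Inl u = map e (tag 0 u)" "map Inr v = map e (tag 1 v)"
    by (simp_all add: e_def)
  ultimately show ?thesis
    unfolding coprod_def prod.case map_e sum_shuffles_map[OF inj] by simp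
qed

lemma sum_shuffles_separated:
  fixes xs ys :: "'a::linorder list"
  assumes sep: "\<And>p q. p \<in> set xs \<Longrightarrow> q \<in> set ys \<Longrightarrow> p < q"
  shows "(\<Sum>t\<in>shuffles xs ys. f (pack t)) = coprod f (pack xs, pack ys)"
proof -
  define g where "g p = (if p \<in> set xs then (0::nat, card {b \<in> set xs. b < p})
                         else (1, card {b \<in> set ys. b < p}))" for p
  have ys_notin: "q \<notin> set xs" if "q \<in> set ys" for q
    using sep that by blast
  have map_g: "map g xs = tag 0 (pack xs)" "map g ys = tag 1 (pack ys)"
    using ys_notin by (auto simp: g_def pack_by_def)
  have mono: "strict_mono_on (set xs \<union> set ys) g"
  proof (rule strict_mono_onI)
    fix p q assume "p \<in> set xs \<union> set ys" "q \<in> set xs \<union> set ys" "p < q"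
    then consider "p \<in> set xs" "q \<in> set xs" | "p \<in> set xs" "q \<in> set ys" | "p \<in> set ys" "q \<in> set ys"
      using sep by (meson Un_iff not_less_iff_gr_or_eq)
    then show "g p < g q"
      using \<open>p < q\<close> strict_mono_onD[OF strict_mono_on_rank] ys_notin
      by cases (auto simp: g_def less_prod_def)
  qed
  have "coprod f (pack xs, pack ys) = (\<Sum>t\<in>shuffles (map g xs) (map g ys). f (pack t))"
    by (simp only: coprod_tagged map_g)
  also have "\<dots> = (\<Sum>t\<in>shuffles xs ys. f (pack t))"
    by (rule sum_shuffles_pack_strict_mono[OF mono])
  finally show ?thesis ..
qed

lemma coprod_pack: "coprod f (pack u, pack v) = coprod f (u, v)"
proof -
  have "(\<Sum>t\<in>shuffles (tag 0 u) (tag 1 v). f (pack t)) = coprod f (pack (tag 0 u), pack (tag 1 v))"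
    by (rule sum_shuffles_separated) auto
  then show ?thesis
    by (simp only: pack_tag coprod_tagged[of f u v])
qed

lemma coprod_Nil_right: "coprod f (u, []) = f (pack u)"
  by (simp add: coprod_tagged)

lemma coprod_Nil_left: "coprod f ([], v) = f (pack v)"
  by (simp add: coprod_tagged)

lemma coprod_comp_pack: "coprod (\<lambda>w. f (pack w)) = coprod f"
  by (simp add: fun_eq_iff coprod_tagged)

lemma coprod_pack_eq: "pack u = pack u' \<Longrightarrow> pack v = pack v' \<Longrightarrow> coprod f (u, v) = coprod f (u', v')"
  by (metis coprod_pack)

definition coprod_right_coeff :: "nat list \<Rightarrow> series \<Rightarrow> series" where
  "coprod_right_coeff v f = (\<lambda>u. coprod f (u, v))"

definition coprod_left_coeff :: "nat list \<Rightarrow> series \<Rightarrow> series" where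
  "coprod_left_coeff u f = (\<lambda>v. coprod f (u, v))"

lemma strict_mono_on_apfst_Suc: "strict_mono_on A (apfst Suc :: nat \<times> 'a::linorder \<Rightarrow> _)"
  by (rule strict_mono_onI) (auto simp: less_prod_def)

lemma coprod_coassoc:
  "coprod_right_coeff b (coprod_left_coeff a f) = coprod_left_coeff a (coprod_right_coeff b f)"
proof
  fix y
  \<comment> \<open>Both sides are sums of f over the packed shuffles of tag 0 a, tag 1 y and tag 2 b.\<close>
  have "coprod_right_coeff b (coprod_left_coeff a f) y
      = (\<Sum>x\<in>shuffles (tag 0 y) (tag 1 b). coprod f (a, pack x))"
    by (simp only: coprod_right_coeff_def coprod_tagged[of "coprod_left_coeff a f"])
      (simp add: coprod_left_coeff_def)
  also have "\<dots> = (\<Sum>x\<in>shuffles (tag 0 y) (tag 1 b).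
                      \<Sum>t\<in>shuffles (tag 0 a) (map (apfst Suc) x). f (pack t))"
  proof (rule sum.cong[OF refl])
    fix x :: "(nat \<times> nat) list"
    have "coprod f (a, pack x) = coprod f (pack (tag 0 a), pack (map (apfst Suc) x))"
      by (rule coprod_pack_eq) (simp_all add: pack_map_strict_mono strict_mono_on_apfst_Suc)
    also have "\<dots> = (\<Sum>t\<in>shuffles (tag 0 a) (map (apfst Suc) x). f (pack t))"
      by (rule sum_shuffles_separated[symmetric]) (auto simp: less_prod_def)
    finally show "coprod f (a, pack x) = \<dots>" .
  qed
  also have "\<dots> = (\<Sum>z\<in>shuffles (tag 1 y) (tag 2 b). \<Sum>t\<in>shuffles (tag 0 a) z. f (pack t))"
    using sum_shuffles_map[of "apfst Suc" "tag 0 y" "tag 1 b" "\<lambda>z. \<Sum>t\<in>shuffles (tag 0 a) z. f (pack t)",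
        OF strict_mono_on_imp_inj_on[OF strict_mono_on_apfst_Suc]]
    by (simp add: o_def numeral_2_eq_2)
  also have "\<dots> = (\<Sum>x\<in>shuffles (tag 0 a) (tag 1 y). \<Sum>t\<in>shuffles x (tag 2 b). f (pack t))"
    by (rule sum_shuffles_assoc) auto
  also have "\<dots> = (\<Sum>x\<in>shuffles (tag 0 a) (tag 1 y). coprod f (pack x, b))"
  proof (rule sum.cong[OF refl])
    fix x assume "x \<in> shuffles (tag 0 a) (tag 1 y)"
    then have "\<forall>p\<in>set x. fst p \<le> 1"
      by (auto simp: set_shuffles)
    then have "(\<Sum>t\<in>shuffles x (tag 2 b). f (pack t)) = coprod f (pack x, pack (tag 2 b))"
      by (intro sum_shuffles_separated) (auto simp: less_prod_def)
    also have "\<dots> = coprod f (pack x, b)"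
      by (rule coprod_pack_eq) simp_all
    finally show "(\<Sum>t\<in>shuffles x (tag 2 b). f (pack t)) = coprod f (pack x, b)" .
  qed
  also have "\<dots> = coprod_left_coeff a (coprod_right_coeff b f) y"
    by (simp only: coprod_left_coeff_def coprod_tagged[of "coprod_right_coeff b f"])
      (simp add: coprod_right_coeff_def)
  finally show "coprod_right_coeff b (coprod_left_coeff a f) y = coprod_left_coeff a (coprod_right_coeff b f) y" .
qed

lemma coprod_right_coeff_Nil: "coprod_right_coeff [] f = (\<lambda>u. f (pack u))"
  by (simp add: coprod_right_coeff_def coprod_Nil_right)

lemma coprod_left_coeff_Nil: "coprod_left_coeff [] f = (\<lambda>v. f (pack v))"
  by (simp add: coprod_left_coeff_def coprod_Nil_left)

lemma coprod_right_coeff_comp_pack: "coprod_right_coeff v (\<lambda>u. f (pack u)) = coprod_right_coeff v f"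
  by (simp add: coprod_right_coeff_def coprod_comp_pack)

lemma coprod_left_coeff_comp_pack: "coprod_left_coeff u (\<lambda>v. f (pack v)) = coprod_left_coeff u f"
  by (simp add: coprod_left_coeff_def coprod_comp_pack)

lemma coprod_right_coeff_sum:
  "coprod_right_coeff v (\<lambda>y. \<Sum>i\<in>I. c i * g i y) = (\<lambda>y. \<Sum>i\<in>I. c i * coprod_right_coeff v (g i) y)"
  unfolding coprod_right_coeff_def coprod_def by (auto simp: sum_distrib_left intro!: ext sum.swap)

section \<open>The antipode\<close>

text \<open>Both recursions solve the defining identity of the antipode for its last
  (respectively first) term, which is the one containing the whole word w.\<close>

function antipode_l :: "series \<Rightarrow> series" where
  "antipode_l f w = (if w = [] then f []
     else - (\<Sum>k<length w. antipode_l (coprod_right_coeff (drop k w) f) (take k w)))"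
  by pat_completeness auto
termination by (relation "measure (\<lambda>(f, w). length w)") auto

function antipode_r :: "series \<Rightarrow> series" where
  "antipode_r f w = (if w = [] then f []
     else - (\<Sum>j\<in>{1..length w}. antipode_r (coprod_left_coeff (take j w) f) (drop j w)))"
  by pat_completeness auto
termination by (relation "measure (\<lambda>(f, w). length w)") auto

declare antipode_l.simps [simp del] antipode_r.simps [simp del]

lemma antipode_l_Nil [simp]: "antipode_l f [] = f []"
  by (simp add: antipode_l.simps)

lemma antipode_r_Nil [simp]: "antipode_r f [] = f []"
  by (simp add: antipode_r.simps)

lemma antipode_l_nonempty:
  "w \<noteq> [] \<Longrightarrow> antipode_l f w = - (\<Sum>k<length w. antipode_l (coprod_right_coeff (drop k w) f) (take k w))"
  by (simp add: antipode_l.simps)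

lemma antipode_r_nonempty:
  "w \<noteq> [] \<Longrightarrow> antipode_r f w = - (\<Sum>j\<in>{1..length w}. antipode_r (coprod_left_coeff (take j w) f) (drop j w))"
  by (simp add: antipode_r.simps)

lemma antipode_l_sum:
  assumes "finite I"
  shows "antipode_l (\<lambda>y. \<Sum>i\<in>I. c i * g i y) w = (\<Sum>i\<in>I. c i * antipode_l (g i) w)"
proof (induction "length w" arbitrary: w g rule: less_induct)
  case less
  show ?case
  proof (cases "w = []")
    case False
    have "antipode_l (\<lambda>y. \<Sum>i\<in>I. c i * g i y) w
        = - (\<Sum>k<length w. \<Sum>i\<in>I. c i * antipode_l (coprod_right_coeff (drop k w) (g i)) (take k w))"
      using less False by (simp add: antipode_l_nonempty coprod_right_coeff_sum)
    also have "\<dots> = (\<Sum>i\<in>I. c i * antipode_l (g i) w)"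
      by (simp add: antipode_l_nonempty[OF False] sum_distrib_left sum_negf[symmetric] sum.swap[of _ I])
    finally show ?thesis .
  qed simp
qed

lemma sum_triangle_swap:
  fixes n :: nat
  shows "(\<Sum>k\<in>{1..<n}. \<Sum>j\<in>{1..k}. G j k) = (\<Sum>j\<in>{1..<n}. \<Sum>k\<in>{j..<n}. G j k)"
proof -
  have "(\<Sum>k\<in>{1..<n}. \<Sum>j\<in>{1..k}. G j k) = (\<Sum>k\<in>{1..<n}. \<Sum>j\<in>{j \<in> {1..<n}. j \<le> k}. G j k)"
    by (intro sum.cong refl) auto
  also have "\<dots> = (\<Sum>j\<in>{1..<n}. \<Sum>k\<in>{k \<in> {1..<n}. j \<le> k}. G j k)"
    by (rule sum.swap_restrict) auto
  also have "\<dots> = (\<Sum>j\<in>{1..<n}. \<Sum>k\<in>{j..<n}. G j k)"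
    by (intro sum.cong refl) auto
  finally show ?thesis .
qed

lemma antipode_l_expand:
  assumes "w \<noteq> []" and shorter: "\<And>g v. length v < length w \<Longrightarrow> antipode_l g v = antipode_r g v"
  shows "antipode_l f w = - f (pack w) + (\<Sum>k\<in>{1..<length w}. \<Sum>j\<in>{1..k}.
    antipode_r (coprod_left_coeff (take j w) (coprod_right_coeff (drop k w) f)) (drop j (take k w)))"
proof -
  have "{..<length w} = insert 0 {1..<length w}"
    using assms(1) by auto
  moreover have "antipode_l (coprod_right_coeff (drop k w) f) (take k w) = - (\<Sum>j\<in>{1..k}.
      antipode_r (coprod_left_coeff (take j w) (coprod_right_coeff (drop k w) f)) (drop j (take k w)))"
    if k: "k \<in> {1..<length w}" for k
  proof -
    have "take k w \<noteq> []" "length (take k w) < length w" "length (take k w) = k"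
      using k by auto
    then show ?thesis
      by (simp add: shorter antipode_r_nonempty take_take min_def)
  qed
  ultimately show ?thesis
    by (simp add: antipode_l_nonempty[OF assms(1)] coprod_right_coeff_def coprod_Nil_left sum_negf)
qed

lemma antipode_r_expand:
  assumes "w \<noteq> []" and shorter: "\<And>g v. length v < length w \<Longrightarrow> antipode_l g v = antipode_r g v"
  shows "antipode_r f w = - f (pack w) + (\<Sum>j\<in>{1..<length w}. \<Sum>k\<in>{j..<length w}.
    antipode_r (coprod_left_coeff (take j w) (coprod_right_coeff (drop k w) f)) (drop j (take k w)))"
proof -
  have "{1..length w} = insert (length w) {1..<length w}"
    using assms(1) by (auto simp: Suc_le_eq)
  moreover have "antipode_r (coprod_left_coeff (take j w) f) (drop j w) = - (\<Sum>k\<in>{j..<length w}.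
      antipode_r (coprod_left_coeff (take j w) (coprod_right_coeff (drop k w) f)) (drop j (take k w)))"
    if j: "j \<in> {1..<length w}" for j
  proof -
    have "antipode_r (coprod_left_coeff (take j w) f) (drop j w) = - (\<Sum>k'<length w - j.
        antipode_l (coprod_right_coeff (drop (k' + j) w) (coprod_left_coeff (take j w) f)) (take k' (drop j w)))"
    proof -
      have "drop j w \<noteq> []" "length (drop j w) < length w"
        using j by auto
      then show ?thesis
        by (simp add: shorter[symmetric] antipode_l_nonempty)
    qed
    also have "\<dots> = - (\<Sum>k\<in>{j..<length w}.
        antipode_l (coprod_right_coeff (drop k w) (coprod_left_coeff (take j w) f)) (take (k - j) (drop j w)))"
      by (rule arg_cong[of _ _ uminus], rule sum.reindex_bij_witness[of _ "\<lambda>k. k - j" "\<lambda>k'. k' + j"])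
        (use j in auto)
    also have "\<dots> = - (\<Sum>k\<in>{j..<length w}.
        antipode_r (coprod_left_coeff (take j w) (coprod_right_coeff (drop k w) f)) (drop j (take k w)))"
      using j by (auto simp: shorter drop_take coprod_coassoc intro!: sum.cong arg_cong[of _ _ uminus])
    finally show ?thesis .
  qed
  ultimately show ?thesis
    by (simp add: antipode_r_nonempty[OF assms(1)] coprod_left_coeff_def coprod_Nil_right sum_negf)
qed

lemma antipode_l_eq_antipode_r: "antipode_l f w = antipode_r f w"
proof (induction "length w" arbitrary: w f rule: less_induct)
  case less
  show ?case
  proof (cases "w = []")
    case False
    show ?thesis
      by (simp only: antipode_l_expand[OF False less.hyps] antipode_r_expand[OF False less.hyps]
          sum_triangle_swap)
  qed simp
qed

lemma antipode_r_sum: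
  "finite I \<Longrightarrow> antipode_r (\<lambda>y. \<Sum>i\<in>I. c i * g i y) w = (\<Sum>i\<in>I. c i * antipode_r (g i) w)"
  by (simp add: antipode_l_eq_antipode_r[symmetric] antipode_l_sum)

lemma antipode_l_lincomb: "antipode_l (\<lambda>w. c * f w + g w) = (\<lambda>w. c * antipode_l f w + antipode_l g w)"
proof
  fix w
  show "antipode_l (\<lambda>w. c * f w + g w) w = c * antipode_l f w + antipode_l g w"
    using antipode_l_sum[of "{True, False}" "\<lambda>i. if i then c else 1" "\<lambda>i. if i then f else g" w]
    by simp
qed

lemma antipode_l_convolution:
  "(\<Sum>m\<le>length w. antipode_l (coprod_right_coeff (drop m w) f) (take m w)) = (if w = [] then f [] else 0)"
proof (cases "w = []")
  case False
  have "{..length w} = insert (length w) {..<length w}"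
    by auto
  moreover have "antipode_l (coprod_right_coeff [] f) w
      = - (\<Sum>m<length w. antipode_l (coprod_right_coeff (drop m w) f) (take m w))"
    by (simp add: antipode_l_nonempty[OF False] coprod_right_coeff_Nil coprod_right_coeff_comp_pack)
  ultimately show ?thesis
    using False by simp
qed (simp add: coprod_right_coeff_Nil)

lemma antipode_r_convolution:
  "(\<Sum>m\<le>length w. antipode_r (coprod_left_coeff (take m w) f) (drop m w)) = (if w = [] then f [] else 0)"
proof (cases "w = []")
  case False
  have "{..length w} = insert 0 {1..length w}"
    by auto
  moreover have "antipode_r (coprod_left_coeff [] f) w
      = - (\<Sum>m\<in>{1..length w}. antipode_r (coprod_left_coeff (take m w) f) (drop m w))"
    by (simp add: antipode_r_nonempty[OF False] coprod_left_coeff_Nil coprod_left_coeff_comp_pack)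
  ultimately show ?thesis
    using False by simp
qed (simp add: coprod_left_coeff_Nil)

lemma antipode_l_left_inverse:
  fixes k :: nat
  assumes "coprod f = (\<lambda>p. \<Sum>i<k. tensor (a i) (b i) p)"
  shows "(\<lambda>w. \<Sum>i<k. smult (antipode_l (a i)) (b i) w) = (\<lambda>w. counit f * sone w)"
proof
  fix w
  have right_coeff: "coprod_right_coeff v f = (\<lambda>y. \<Sum>i<k. b i v * a i y)" for v
    using assms by (auto simp: coprod_right_coeff_def tensor_def mult.commute)
  have "(\<Sum>i<k. smult (antipode_l (a i)) (b i) w)
      = (\<Sum>m\<le>length w. \<Sum>i<k. b i (drop m w) * antipode_l (a i) (take m w))"
    unfolding smult_def by (subst sum.swap) (simp add: mult.commute)
  also have "\<dots> = (\<Sum>m\<le>length w. antipode_l (coprod_right_coeff (drop m w) f) (take m w))"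
    by (simp add: right_coeff antipode_l_sum)
  also have "\<dots> = counit f * sone w"
    by (simp add: antipode_l_convolution counit_def sone_def)
  finally show "(\<Sum>i<k. smult (antipode_l (a i)) (b i) w) = counit f * sone w" .
qed

lemma antipode_l_right_inverse:
  fixes k :: nat
  assumes "coprod f = (\<lambda>p. \<Sum>i<k. tensor (a i) (b i) p)"
  shows "(\<lambda>w. \<Sum>i<k. smult (a i) (antipode_l (b i)) w) = (\<lambda>w. counit f * sone w)"
proof
  fix w
  have left_coeff: "coprod_left_coeff u f = (\<lambda>y. \<Sum>i<k. a i u * b i y)" for u
    using assms by (auto simp: coprod_left_coeff_def tensor_def)
  have "(\<Sum>i<k. smult (a i) (antipode_l (b i)) w)
      = (\<Sum>m\<le>length w. \<Sum>i<k. a i (take m w) * antipode_r (b i) (drop m w))"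
    unfolding smult_def by (subst sum.swap) (simp add: antipode_l_eq_antipode_r)
  also have "\<dots> = (\<Sum>m\<le>length w. antipode_r (coprod_left_coeff (take m w) f) (drop m w))"
    by (simp add: left_coeff antipode_r_sum)
  also have "\<dots> = counit f * sone w"
    by (simp add: antipode_r_convolution counit_def sone_def)
  finally show "(\<Sum>i<k. smult (a i) (antipode_l (b i)) w) = counit f * sone w" .
qed

lemma is_antipode_on_antipode_l:
  assumes "\<And>f. f \<in> H \<Longrightarrow> antipode_l f \<in> H"
  shows "is_antipode_on H antipode_l"
  unfolding is_antipode_on_def
  using assms antipode_l_lincomb antipode_l_left_inverse antipode_l_right_inverse by blast

section \<open>r-equivalence of words\<close>

definition r_relabeling :: "nat \<Rightarrow> 'a::linorder list \<Rightarrow> ('a \<Rightarrow> 'b::linorder) \<Rightarrow> bool" where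
  "r_relabeling r w \<phi> \<longleftrightarrow> inj_on \<phi> (set w) \<and>
     (\<forall>a\<in>set w. \<forall>b\<in>set w. r \<le> count_list w a \<longrightarrow> r \<le> count_list w b \<longrightarrow> (\<phi> a < \<phi> b \<longleftrightarrow> a < b))"

definition r_equiv :: "nat \<Rightarrow> 'a::linorder list \<Rightarrow> 'b::linorder list \<Rightarrow> bool" where
  "r_equiv r w w' \<longleftrightarrow> (\<exists>\<phi>. r_relabeling r w \<phi> \<and> map \<phi> w = w')"

lemma r_equiv_refl: "r_equiv r w w"
  unfolding r_equiv_def r_relabeling_def by (rule exI[of _ id]) auto

lemma r_equiv_sym:
  assumes "r_equiv r w w'"
  shows "r_equiv r w' w"
proof -
  obtain \<phi> where \<phi>: "r_relabeling r w \<phi>" and w': "w' = map \<phi> w"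
    using assms unfolding r_equiv_def by blast
  have inj: "inj_on \<phi> (set w)"
    using \<phi> by (simp add: r_relabeling_def)
  define \<psi> where "\<psi> = inv_into (set w) \<phi>"
  have "r_relabeling r w' \<psi>"
    using \<phi> inj unfolding r_relabeling_def w' \<psi>_def
    by (auto simp: inj_on_inv_into count_list_inj_map)
  moreover have "map \<psi> w' = w"
    using inj by (simp add: w' \<psi>_def map_idI)
  ultimately show ?thesis
    unfolding r_equiv_def by blast
qed

lemma r_equiv_trans:
  assumes "r_equiv r w1 w2" "r_equiv r w2 w3"
  shows "r_equiv r w1 w3"
proof -
  obtain \<phi> where \<phi>: "r_relabeling r w1 \<phi>" and w2: "w2 = map \<phi> w1"
    using assms(1) unfolding r_equiv_def by blast
  obtain \<psi> where \<psi>: "r_relabeling r w2 \<psi>" and w3: "w3 = map \<psi> w2"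
    using assms(2) unfolding r_equiv_def by blast
  have "r_relabeling r w1 (\<psi> \<circ> \<phi>)"
    using \<phi> \<psi> unfolding r_relabeling_def w2
    by (auto simp: comp_inj_on count_list_inj_map)
  then show ?thesis
    unfolding r_equiv_def w3 w2 by auto
qed

lemma equivp_r_equiv: "equivp (r_equiv r)"
proof (rule equivpI)
  show "reflp (r_equiv r)"
    by (rule reflpI) (rule r_equiv_refl)
  show "symp (r_equiv r)"
    by (rule sympI) (rule r_equiv_sym)
  show "transp (r_equiv r)"
    by (rule transpI) (rule r_equiv_trans)
qed

lemma r_equiv_length: "r_equiv r w w' \<Longrightarrow> length w' = length w"
  unfolding r_equiv_def by auto

lemma r_equiv_Nil_iff: "r_equiv r [] w \<longleftrightarrow> w = []"
  unfolding r_equiv_def r_relabeling_def by auto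

lemma r_relabeling_count_le:
  assumes "r_relabeling r w \<phi>" and "\<And>a. count_list u a \<le> count_list w a"
  shows "r_relabeling r u \<phi>"
proof -
  have "set u \<subseteq> set w"
    using assms(2) by (metis count_list_0_iff le_zero_eq subsetI)
  then show ?thesis
    using assms unfolding r_relabeling_def by (meson inj_on_subset le_trans subsetD)
qed

lemma r_equiv_take: "r_equiv r w w' \<Longrightarrow> r_equiv r (take k w) (take k w')"
  unfolding r_equiv_def
  by (metis append_take_drop_id count_list_append le_add1 r_relabeling_count_le take_map)

lemma r_equiv_drop: "r_equiv r w w' \<Longrightarrow> r_equiv r (drop k w) (drop k w')"
  unfolding r_equiv_def
  by (metis append_take_drop_id count_list_append le_add2 r_relabeling_count_le drop_map)

lemma r_equiv_map_strict_mono: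
  fixes g :: "'a::linorder \<Rightarrow> 'b::linorder"
  assumes "strict_mono_on (set t) g"
  shows "r_equiv r t (map g t)"
proof -
  have "r_relabeling r t g"
    using assms by (auto simp: r_relabeling_def strict_mono_on_imp_inj_on strict_mono_on_less)
  then show ?thesis
    unfolding r_equiv_def by blast
qed

lemma r_equiv_pack: "r_equiv r t (pack t)"
  by (simp add: pack_eq_map_rank r_equiv_map_strict_mono strict_mono_on_rank)

lemma count_list_shuffles_tag:
  assumes "t \<in> shuffles (tag 0 u) (tag 1 v)"
  shows "count_list t (0, a) = count_list u a" "count_list t (1, a) = count_list v a"
proof -
  have "count_list t p = count_list (tag 0 u) p + count_list (tag 1 v) p" for p
    using mset_shuffles[OF assms] by (metis count_mset count_union)
  moreover have "count_list (tag 1 v) (0, a) = 0" "count_list (tag 0 u) (1, a) = 0"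
    by (simp_all add: count_list_0_iff image_iff)
  moreover have "count_list (tag i w) (i, a) = count_list w a" for i w
    by (simp add: count_list_map_conv inj_def)
  ultimately show "count_list t (0, a) = count_list u a" "count_list t (1, a) = count_list v a"
    by simp_all
qed

definition tagwise :: "('a \<Rightarrow> 'b) \<Rightarrow> ('a \<Rightarrow> 'b) \<Rightarrow> nat \<times> 'a \<Rightarrow> nat \<times> 'b" where
  "tagwise \<phi> \<psi> p = (fst p, if fst p = 0 then \<phi> (snd p) else \<psi> (snd p))"

lemma map_tagwise_tag [simp]:
  "map (tagwise \<phi> \<psi>) (tag 0 u) = tag 0 (map \<phi> u)" "map (tagwise \<phi> \<psi>) (tag 1 v) = tag 1 (map \<psi> v)"
  by (simp_all add: tagwise_def)

lemma inj_on_tagwise: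
  fixes \<phi> \<psi> :: "'a \<Rightarrow> 'b"
  assumes "inj_on \<phi> A" "inj_on \<psi> B"
  shows "inj_on (tagwise \<phi> \<psi>) (Pair (0::nat) ` A \<union> Pair 1 ` B)"
proof (rule inj_onI)
  fix p q :: "nat \<times> 'a"
  assume p: "p \<in> Pair 0 ` A \<union> Pair 1 ` B" and q: "q \<in> Pair 0 ` A \<union> Pair 1 ` B"
    and eq: "tagwise \<phi> \<psi> p = tagwise \<phi> \<psi> q"
  then have fst_eq: "fst p = fst q"
    by (simp add: tagwise_def)
  show "p = q"
  proof (cases "fst p = 0")
    case True
    then have "snd p \<in> A" "snd q \<in> A" "\<phi> (snd p) = \<phi> (snd q)"
      using p q eq fst_eq by (auto simp: tagwise_def)
    then show ?thesis
      using fst_eq inj_onD[OF assms(1)] by (simp add: prod_eq_iff)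
  next
    case False
    then have "snd p \<in> B" "snd q \<in> B" "\<psi> (snd p) = \<psi> (snd q)"
      using p q eq fst_eq by (auto simp: tagwise_def)
    then show ?thesis
      using fst_eq inj_onD[OF assms(2)] by (simp add: prod_eq_iff)
  qed
qed

lemma r_relabeling_shuffles_tag:
  assumes \<phi>: "r_relabeling r u \<phi>" and \<psi>: "r_relabeling r v \<psi>"
    and t: "t \<in> shuffles (tag 0 u) (tag 1 v)"
  shows "r_relabeling r t (tagwise \<phi> \<psi>)"
proof -
  have set_t: "set t = Pair 0 ` set u \<union> Pair 1 ` set v"
    using set_shuffles[OF t] by simp
  have "inj_on (tagwise \<phi> \<psi>) (set t)"
    using \<phi> \<psi> unfolding set_t r_relabeling_def by (intro inj_on_tagwise) auto
  moreover have "tagwise \<phi> \<psi> p < tagwise \<phi> \<psi> q \<longleftrightarrow> p < q"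
    if "p \<in> set t" "q \<in> set t" "r \<le> count_list t p" "r \<le> count_list t q" for p q
    using that \<phi> \<psi> count_list_shuffles_tag[OF t] unfolding set_t r_relabeling_def
    by (auto simp: less_prod_def tagwise_def)
  ultimately show ?thesis
    unfolding r_relabeling_def by blast
qed

definition r_invariant :: "nat \<Rightarrow> series set" where
  "r_invariant r = {f. bounded_degree f \<and> (\<forall>w w'. r_equiv r w w' \<longrightarrow> f w = f w')}"

lemma r_invariant_eq: "f \<in> r_invariant r \<Longrightarrow> r_equiv r w w' \<Longrightarrow> f w = f w'"
  by (simp add: r_invariant_def)

lemma coprod_r_equiv:
  assumes f: "f \<in> r_invariant r" and "r_equiv r u u'" "r_equiv r v v'"
  shows "coprod f (u, v) = coprod f (u', v')"
proof -
  obtain \<phi> \<psi> where \<phi>: "r_relabeling r u \<phi>" "u' = map \<phi> u" and \<psi>: "r_relabeling r v \<psi>" "v' = map \<psi> v"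
    using assms(2,3) unfolding r_equiv_def by blast
  define g where "g = tagwise \<phi> \<psi>"
  have inj: "inj_on g (set (tag 0 u) \<union> set (tag 1 v))"
    unfolding g_def set_map using \<phi>(1) \<psi>(1) by (intro inj_on_tagwise) (auto simp: r_relabeling_def)
  have map_g: "map g (tag 0 u) = tag 0 u'" "map g (tag 1 v) = tag 1 v'"
    by (simp_all only: g_def \<phi>(2) \<psi>(2) map_tagwise_tag)
  have "coprod f (u', v') = (\<Sum>t\<in>shuffles (map g (tag 0 u)) (map g (tag 1 v)). f (pack t))"
    by (simp only: coprod_tagged map_g)
  also have "\<dots> = (\<Sum>t\<in>shuffles (tag 0 u) (tag 1 v). f (pack (map g t)))"
    by (rule sum_shuffles_map[OF inj])
  also have "\<dots> = coprod f (u, v)"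
    unfolding coprod_tagged
  proof (rule sum.cong[OF refl])
    fix t assume t: "t \<in> shuffles (tag 0 u) (tag 1 v)"
    have "r_equiv r t (map g t)"
      using r_relabeling_shuffles_tag[OF \<phi>(1) \<psi>(1) t] unfolding r_equiv_def g_def by blast
    then have "r_equiv r (pack t) (pack (map g t))"
      by (meson r_equiv_pack r_equiv_sym r_equiv_trans)
    then show "f (pack (map g t)) = f (pack t)"
      using r_invariant_eq[OF f] by simp
  qed
  finally show ?thesis ..
qed

lemma r_invariant_zero: "(\<lambda>w. 0) \<in> r_invariant r"
  by (simp add: r_invariant_def bounded_degree_def)

lemma r_invariant_lincomb:
  assumes "f \<in> r_invariant r" "g \<in> r_invariant r"
  shows "(\<lambda>w. c * f w + g w) \<in> r_invariant r"
proof -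
  obtain d1 d2 where "\<forall>w. d1 < length w \<longrightarrow> f w = 0" "\<forall>w. d2 < length w \<longrightarrow> g w = 0"
    using assms by (auto simp: r_invariant_def bounded_degree_def)
  then have "bounded_degree (\<lambda>w. c * f w + g w)"
    unfolding bounded_degree_def by (intro exI[of _ "max d1 d2"]) simp
  then show ?thesis
    using assms by (simp add: r_invariant_def)
qed

lemma r_invariant_sum:
  assumes "finite S" "S \<subseteq> r_invariant r"
  shows "(\<lambda>w. \<Sum>b\<in>S. c b * b w) \<in> r_invariant r"
  using assms by (induction S rule: finite_induct) (simp_all add: r_invariant_zero r_invariant_lincomb)

lemma r_invariant_smult:
  assumes f: "f \<in> r_invariant r" and g: "g \<in> r_invariant r"
  shows "smult f g \<in> r_invariant r"
proof -
  obtain d1 d2 where d1: "\<forall>w. d1 < length w \<longrightarrow> f w = 0" and d2: "\<forall>w. d2 < length w \<longrightarrow> g w = 0"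
    using f g by (auto simp: r_invariant_def bounded_degree_def)
  have vanish: "f (take k w) * g (drop k w) = 0" if "d1 + d2 < length w" for k w
    using d1 d2 that by (cases "d1 < k") auto
  have "bounded_degree (smult f g)"
    unfolding bounded_degree_def smult_def by (intro exI[of _ "d1 + d2"] allI impI sum.neutral ballI vanish)
  moreover have "smult f g w = smult f g w'" if "r_equiv r w w'" for w w'
    using that r_invariant_eq[OF f r_equiv_take[OF that]] r_invariant_eq[OF g r_equiv_drop[OF that]]
    by (simp add: smult_def r_equiv_length)
  ultimately show ?thesis
    by (simp add: r_invariant_def)
qed

lemma coprod_eq_0_if_long:
  assumes "\<And>w. d < length w \<Longrightarrow> f w = 0" "d < length u + length v"
  shows "coprod f (u, v) = 0"
  using assms by (auto simp: coprod_tagged length_shuffles intro!: sum.neutral)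

lemma r_invariant_coprod_right_coeff:
  assumes f: "f \<in> r_invariant r"
  shows "coprod_right_coeff v f \<in> r_invariant r"
proof -
  obtain d where d: "\<And>w. d < length w \<Longrightarrow> f w = 0"
    using f by (auto simp: r_invariant_def bounded_degree_def)
  have "bounded_degree (coprod_right_coeff v f)"
    unfolding bounded_degree_def coprod_right_coeff_def
    by (intro exI[of _ d] allI impI coprod_eq_0_if_long[OF d]) auto
  then show ?thesis
    using coprod_r_equiv[OF f _ r_equiv_refl] by (simp add: r_invariant_def coprod_right_coeff_def)
qed

lemma antipode_l_eq_0_if_long:
  assumes "\<And>y. d < length y \<Longrightarrow> f y = 0" "d < length w"
  shows "antipode_l f w = 0"
  using assms
proof (induction "length w" arbitrary: w f d rule: less_induct)
  case less
  have "antipode_l (coprod_right_coeff (drop k w) f) (take k w) = 0" if k: "k < length w" for k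
  proof (cases "k = 0")
    case True
    then show ?thesis
      using less.prems by (auto simp: coprod_right_coeff_def intro!: coprod_eq_0_if_long[of d])
  next
    case False
    have "coprod_right_coeff (drop k w) f y = 0" if "d - (length w - k) < length y" for y
      unfolding coprod_right_coeff_def using less.prems k that by (intro coprod_eq_0_if_long) auto
    then show ?thesis
      using k False less.prems by (intro less.hyps[where d = "d - (length w - k)"]) auto
  qed
  moreover have "w \<noteq> []"
    using less.prems by auto
  ultimately show ?case
    by (simp add: antipode_l_nonempty)
qed

lemma antipode_l_r_equiv:
  assumes "f \<in> r_invariant r" "r_equiv r w w'"
  shows "antipode_l f w = antipode_l f w'"
  using assms
proof (induction "length w" arbitrary: w w' f rule: less_induct)
  case less
  have len: "length w' = length w"
    by (rule r_equiv_length[OF less.prems(2)])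
  show ?case
  proof (cases "w = []")
    case True
    then show ?thesis
      using less.prems(2) by (simp add: r_equiv_Nil_iff)
  next
    case False
    have "antipode_l (coprod_right_coeff (drop k w) f) (take k w)
        = antipode_l (coprod_right_coeff (drop k w') f) (take k w')" if k: "k < length w" for k
    proof -
      have "coprod_right_coeff (drop k w) f = coprod_right_coeff (drop k w') f"
        using coprod_r_equiv[OF less.prems(1) r_equiv_refl r_equiv_drop[OF less.prems(2)]]
        by (simp add: coprod_right_coeff_def)
      moreover have "length (take k w) < length w"
        using k False by simp
      ultimately show ?thesis
        using less.hyps[OF _ r_invariant_coprod_right_coeff[OF less.prems(1)] r_equiv_take[OF less.prems(2)]]
        by simp
    qed
    moreover have "w' \<noteq> []"
      using False len by auto
    ultimately show ?thesis
      using False len by (simp add: antipode_l_nonempty)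
  qed
qed

lemma r_invariant_antipode_l:
  assumes f: "f \<in> r_invariant r"
  shows "antipode_l f \<in> r_invariant r"
proof -
  obtain d where d: "\<And>w. d < length w \<Longrightarrow> f w = 0"
    using f by (auto simp: r_invariant_def bounded_degree_def)
  have "bounded_degree (antipode_l f)"
    unfolding bounded_degree_def by (intro exI[of _ d] allI impI antipode_l_eq_0_if_long[OF d])
  then show ?thesis
    using antipode_l_r_equiv[OF f] by (simp add: r_invariant_def)
qed

section \<open>The basis M_(Phi,P) and the r-invariant series\<close>

lemma partition_on_block_unique:
  "partition_on A Q \<Longrightarrow> B \<in> Q \<Longrightarrow> B' \<in> Q \<Longrightarrow> x \<in> B \<Longrightarrow> x \<in> B' \<Longrightarrow> B' = B"
  unfolding partition_on_def disjoint_def by blast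

lemma partition_on_Union_subset: "partition_on A Q \<Longrightarrow> Q' \<subseteq> Q \<Longrightarrow> partition_on (\<Union>Q') Q'"
  unfolding partition_on_def by (auto intro: pairwise_subset)

lemma partition_on_Diff_Union:
  assumes part: "partition_on A (Q \<union> Q')" and disj: "Q \<inter> Q' = {}"
  shows "A - \<Union>Q = \<Union>Q'"
proof -
  have "\<Union>Q \<inter> \<Union>Q' = {}"
  proof (intro equalityI subsetI)
    fix x assume "x \<in> \<Union>Q \<inter> \<Union>Q'"
    then obtain X Y where XY: "X \<in> Q" "Y \<in> Q'" "x \<in> X" "x \<in> Y"
      by blast
    then have "X = Y"
      using partition_on_block_unique[OF part, of Y X x] by simp
    then show "x \<in> {}"
      using disj XY(1,2) by blast
  qed simp
  then show ?thesis
    using partition_onD1[OF part] by auto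
qed

lemma partition_on_Un:
  assumes "partition_on A Q" "partition_on B Q'" "A \<inter> B = {}"
  shows "partition_on (A \<union> B) (Q \<union> Q')"
proof (rule partition_onI)
  show "\<Union>(Q \<union> Q') = A \<union> B"
    using assms(1,2) by (auto simp: partition_on_def)
  have sub: "p \<subseteq> A" if "p \<in> Q" for p
    using assms(1) that by (auto simp: partition_on_def)
  have sub': "q \<subseteq> B" if "q \<in> Q'" for q
    using assms(2) that by (auto simp: partition_on_def)
  show "disjnt p q" if pq: "p \<in> Q \<union> Q'" "q \<in> Q \<union> Q'" "p \<noteq> q" for p q
  proof -
    consider "p \<in> Q" "q \<in> Q" | "p \<in> Q'" "q \<in> Q'" | "p \<in> Q" "q \<in> Q'" | "p \<in> Q'" "q \<in> Q"
      using pq(1,2) by blast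
    then show ?thesis
    proof cases
      case 1
      then show ?thesis
        using partition_onD2[OF assms(1)] pq(3) by (simp add: pairwise_def)
    next
      case 2
      then show ?thesis
        using partition_onD2[OF assms(2)] pq(3) by (simp add: pairwise_def)
    next
      case 3
      then show ?thesis
        using sub[of p] sub'[of q] assms(3) by (auto simp: disjnt_def)
    next
      case 4
      then show ?thesis
        using sub[of q] sub'[of p] assms(3) by (auto simp: disjnt_def)
    qed
  qed
  show "{} \<notin> Q \<union> Q'"
    using assms(1,2) by (auto simp: partition_on_def)
qed

lemma r_set_composition_partition_on:
  assumes "r_set_composition r n Phi P"
  shows "partition_on {1..n} (set Phi \<union> P)"
proof -
  obtain A where "A \<subseteq> {1..n}" "partition_on A (set Phi)" "partition_on ({1..n} - A) P"
    using assms unfolding r_set_composition_def set_composition_def by blast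
  then show ?thesis
    using partition_on_Un[of A "set Phi" "{1..n} - A" P] by (simp add: Un_absorb1)
qed

text \<open>Positions are 1-based, as in the definition of fits.\<close>

definition positions :: "nat list \<Rightarrow> nat \<Rightarrow> nat set" where
  "positions w a = {p \<in> {1..length w}. w ! (p - 1) = a}"

lemma card_positions: "card (positions w a) = count_list w a"
proof -
  have "positions w a = Suc ` {i. i < length w \<and> w ! i = a}"
  proof (intro equalityI subsetI)
    fix p assume "p \<in> positions w a"
    then have "p = Suc (p - 1)" "p - 1 \<in> {i. i < length w \<and> w ! i = a}"
      by (auto simp: positions_def)
    then show "p \<in> Suc ` {i. i < length w \<and> w ! i = a}"
      by (rule image_eqI)
  qed (auto simp: positions_def)
  then show ?thesis
    by (simp add: card_image count_list_eq_length_filter length_filter_conv_card eq_commute)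
qed

lemma fits_nth_eq_iff:
  "fits n Phi P w \<Longrightarrow> j \<in> {1..n} \<Longrightarrow> k \<in> {1..n} \<Longrightarrow>
    w ! (j - 1) = w ! (k - 1) \<longleftrightarrow> (\<exists>B\<in>set Phi \<union> P. j \<in> B \<and> k \<in> B)"
  unfolding fits_def by blast

lemma fits_positions:
  assumes fits: "fits n Phi P w" and part: "partition_on {1..n} (set Phi \<union> P)"
    and B: "B \<in> set Phi \<union> P" "j \<in> B"
  shows "positions w (w ! (j - 1)) = B"
proof -
  have blocks_sub: "B' \<subseteq> {1..n}" if "B' \<in> set Phi \<union> P" for B'
    using part that by (auto simp: partition_on_def)
  have j: "j \<in> {1..n}"
    using blocks_sub[OF B(1)] B(2) by blast
  have "p \<in> positions w (w ! (j - 1)) \<longleftrightarrow> p \<in> B" for p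
  proof -
    have "p \<in> positions w (w ! (j - 1)) \<longleftrightarrow> p \<in> {1..n} \<and> w ! (p - 1) = w ! (j - 1)"
      using fits by (simp add: positions_def fits_def)
    also have "\<dots> \<longleftrightarrow> p \<in> {1..n} \<and> (\<exists>B'\<in>set Phi \<union> P. p \<in> B' \<and> j \<in> B')"
      using fits_nth_eq_iff[OF fits _ j] by blast
    also have "\<dots> \<longleftrightarrow> p \<in> B"
    proof
      assume "p \<in> {1..n} \<and> (\<exists>B'\<in>set Phi \<union> P. p \<in> B' \<and> j \<in> B')"
      then obtain B' where "B' \<in> set Phi \<union> P" "p \<in> B'" "j \<in> B'"
        by blast
      then show "p \<in> B"
        using partition_on_block_unique[OF part B(1) _ B(2)] by blast
    qed (use B blocks_sub in blast)
    finally show ?thesis .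
  qed
  then show ?thesis
    by blast
qed

lemma fits_count_list:
  assumes "fits n Phi P w" "partition_on {1..n} (set Phi \<union> P)" "B \<in> set Phi \<union> P" "j \<in> B"
  shows "count_list w (w ! (j - 1)) = card B"
  unfolding card_positions[symmetric] fits_positions[OF assms] ..

lemma r_equiv_of_nth:
  fixes w :: "'a::linorder list" and w' :: "'b::linorder list"
  assumes len: "length w' = length w"
    and eq: "\<And>i j. i < length w \<Longrightarrow> j < length w \<Longrightarrow> w' ! i = w' ! j \<longleftrightarrow> w ! i = w ! j"
    and less: "\<And>i j. i < length w \<Longrightarrow> j < length w \<Longrightarrow> r \<le> count_list w (w ! i) \<Longrightarrow>
                 r \<le> count_list w (w ! j) \<Longrightarrow> w' ! i < w' ! j \<longleftrightarrow> w ! i < w ! j"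
  shows "r_equiv r w w'"
proof -
  have "\<forall>a\<in>set w. \<exists>i. i < length w \<and> w ! i = a"
    by (auto simp: in_set_conv_nth)
  then obtain idx where idx: "\<And>a. a \<in> set w \<Longrightarrow> idx a < length w \<and> w ! idx a = a"
    by (metis bchoice)
  define \<phi> where "\<phi> a = w' ! idx a" for a
  have \<phi>_nth: "\<phi> (w ! i) = w' ! i" if "i < length w" for i
  proof -
    have "idx (w ! i) < length w" "w ! idx (w ! i) = w ! i"
      using idx that by auto
    then show ?thesis
      using eq[OF _ that] by (simp add: \<phi>_def)
  qed
  have "map \<phi> w = w'"
    by (rule nth_equalityI) (simp_all add: len \<phi>_nth)
  moreover have "r_relabeling r w \<phi>"
    unfolding r_relabeling_def
  proof (intro conjI inj_onI ballI impI)
    fix a b assume "a \<in> set w" "b \<in> set w"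
    then have ia: "idx a < length w" "w ! idx a = a" and ib: "idx b < length w" "w ! idx b = b"
      using idx by auto
    show "\<phi> a = \<phi> b \<Longrightarrow> a = b"
      using eq[OF ia(1) ib(1)] ia ib by (simp add: \<phi>_def)
    show "r \<le> count_list w a \<Longrightarrow> r \<le> count_list w b \<Longrightarrow> \<phi> a < \<phi> b \<longleftrightarrow> a < b"
      using less[OF ia(1) ib(1)] ia ib by (simp add: \<phi>_def)
  qed
  ultimately show ?thesis
    unfolding r_equiv_def by blast
qed

lemma fits_less:
  "fits n Phi P w \<Longrightarrow> l < m \<Longrightarrow> m < length Phi \<Longrightarrow> j \<in> Phi ! l \<Longrightarrow> k \<in> Phi ! m \<Longrightarrow>
    w ! (j - 1) < w ! (k - 1)"
  unfolding fits_def by blast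

lemma fits_frequent_in_composition:
  assumes fits: "fits n Phi P w" and part: "partition_on {1..n} (set Phi \<union> P)"
    and small: "\<forall>B\<in>P. card B < r" and i: "i < n" and freq: "r \<le> count_list w (w ! i)"
  shows "\<exists>l<length Phi. Suc i \<in> Phi ! l"
proof -
  have "Suc i \<in> \<Union>(set Phi \<union> P)"
    using partition_onD1[OF part] i by auto
  then obtain B where B: "B \<in> set Phi \<union> P" "Suc i \<in> B"
    by blast
  have "r \<le> card B"
    using fits_count_list[OF fits part B] freq by simp
  then have "B \<in> set Phi"
    using B(1) small by auto
  then show ?thesis
    using B(2) by (auto simp: in_set_conv_nth)
qed

lemma fits_imp_r_equiv:
  assumes fits: "fits n Phi P w" and fits': "fits n Phi P w'"
    and part: "partition_on {1..n} (set Phi \<union> P)" and small: "\<forall>B\<in>P. card B < r"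
  shows "r_equiv r w w'"
proof (rule r_equiv_of_nth)
  have len: "length w = n" "length w' = n"
    using fits fits' by (simp_all add: fits_def)
  then show "length w' = length w"
    by simp
  have eq_iff: "u ! i = u ! j \<longleftrightarrow> (\<exists>B\<in>set Phi \<union> P. Suc i \<in> B \<and> Suc j \<in> B)"
    if "fits n Phi P u" "i < n" "j < n" for u i j
    using fits_nth_eq_iff[OF that(1), of "Suc i" "Suc j"] that(2,3) by simp
  show "w' ! i = w' ! j \<longleftrightarrow> w ! i = w ! j" if "i < length w" "j < length w" for i j
    using eq_iff[OF fits] eq_iff[OF fits'] that len by simp
  show "w' ! i < w' ! j \<longleftrightarrow> w ! i < w ! j"
    if ij: "i < length w" "j < length w" and freq: "r \<le> count_list w (w ! i)" "r \<le> count_list w (w ! j)"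
    for i j
  proof -
    obtain l where l: "l < length Phi" "Suc i \<in> Phi ! l"
      using fits_frequent_in_composition[OF fits part small, of i] ij(1) freq(1) len by auto
    obtain m where m: "m < length Phi" "Suc j \<in> Phi ! m"
      using fits_frequent_in_composition[OF fits part small, of j] ij(2) freq(2) len by auto
    have less: "u ! i < u ! j" if "fits n Phi P u" "l < m" for u
      using fits_less[OF that(1,2) m(1) l(2) m(2)] by simp
    have greater: "u ! j < u ! i" if "fits n Phi P u" "m < l" for u
      using fits_less[OF that(1,2) l(1) m(2) l(2)] by simp
    have equal: "u ! i = u ! j" if "fits n Phi P u" "l = m" for u
      using eq_iff[OF that(1)] ij len l m that(2) by auto
    consider "l < m" | "l = m" | "m < l"
      by linarith
    then show ?thesis
      by cases (use less[OF fits] less[OF fits'] greater[OF fits] greater[OF fits'] equal[OF fits]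
          equal[OF fits'] in auto)
  qed
qed

lemma r_equiv_imp_fits:
  assumes fits: "fits n Phi P w" and equiv: "r_equiv r w w'"
    and part: "partition_on {1..n} (set Phi \<union> P)" and big: "\<forall>B\<in>set Phi. r \<le> card B"
  shows "fits n Phi P w'"
proof -
  obtain \<phi> where \<phi>: "r_relabeling r w \<phi>" and w': "w' = map \<phi> w"
    using equiv unfolding r_equiv_def by blast
  have len: "length w = n"
    using fits by (simp add: fits_def)
  have nth: "w' ! (j - 1) = \<phi> (w ! (j - 1))" if "j \<in> {1..n}" for j
    unfolding w' using that len by (intro nth_map) auto
  have in_set: "w ! (j - 1) \<in> set w" if "j \<in> {1..n}" for j
    using that len by auto
  have "w' ! (j - 1) = w' ! (k - 1) \<longleftrightarrow> (\<exists>B\<in>set Phi \<union> P. j \<in> B \<and> k \<in> B)"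
    if "j \<in> {1..n}" "k \<in> {1..n}" for j k
  proof -
    have "w' ! (j - 1) = w' ! (k - 1) \<longleftrightarrow> w ! (j - 1) = w ! (k - 1)"
      unfolding nth[OF that(1)] nth[OF that(2)] using \<phi> in_set[OF that(1)] in_set[OF that(2)]
      by (auto simp: r_relabeling_def inj_on_eq_iff)
    then show ?thesis
      using fits_nth_eq_iff[OF fits that] by simp
  qed
  moreover have "w' ! (j - 1) < w' ! (k - 1)"
    if lm: "l < m" "m < length Phi" and jk: "j \<in> Phi ! l" "k \<in> Phi ! m" for l m j k
  proof -
    have blocks: "Phi ! l \<in> set Phi \<union> P" "Phi ! m \<in> set Phi \<union> P"
      using lm by auto
    then have j: "j \<in> {1..n}" and k: "k \<in> {1..n}"
      using part jk by (auto simp: partition_on_def)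
    have "r \<le> count_list w (w ! (j - 1))" "r \<le> count_list w (w ! (k - 1))"
      using fits_count_list[OF fits part blocks(1) jk(1)] fits_count_list[OF fits part blocks(2) jk(2)]
        big blocks lm by auto
    then show ?thesis
      unfolding nth[OF j] nth[OF k] using \<phi> fits_less[OF fits lm jk] in_set[OF j] in_set[OF k]
      by (simp add: r_relabeling_def)
  qed
  moreover have "length w' = n"
    using len by (simp add: w')
  ultimately show ?thesis
    unfolding fits_def by blast
qed

definition r_class :: "nat \<Rightarrow> nat list \<Rightarrow> series" where
  "r_class r w = (\<lambda>x. if r_equiv r w x then 1 else 0)"

lemma M_eq_r_class:
  assumes rsc: "r_set_composition r n Phi P" and fits: "fits n Phi P w"
  shows "M n Phi P = r_class r w"
proof
  fix x
  have part: "partition_on {1..n} (set Phi \<union> P)"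
    by (rule r_set_composition_partition_on[OF rsc])
  have big: "\<forall>B\<in>set Phi. r \<le> card B" and small: "\<forall>B\<in>P. card B < r"
    using rsc by (auto simp: r_set_composition_def)
  have "fits n Phi P x \<longleftrightarrow> r_equiv r w x"
    using fits_imp_r_equiv[OF fits _ part small] r_equiv_imp_fits[OF fits _ part big] by blast
  then show "M n Phi P x = r_class r w x"
    by (simp add: M_def r_class_def)
qed

lemma positions_subset: "positions w a \<subseteq> {1..length w}"
  by (auto simp: positions_def)

lemma positions_nonempty: "a \<in> set w \<Longrightarrow> positions w a \<noteq> {}"
proof -
  assume "a \<in> set w"
  then obtain i where "i < length w" "w ! i = a"
    by (auto simp: in_set_conv_nth)
  then have "Suc i \<in> positions w a"
    by (simp add: positions_def)
  then show ?thesis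
    by blast
qed

lemma positions_disjoint: "a \<noteq> b \<Longrightarrow> positions w a \<inter> positions w b = {}"
  by (auto simp: positions_def)

lemma inj_on_positions: "inj_on (positions w) (set w)"
  by (rule inj_onI) (metis Int_absorb positions_disjoint positions_nonempty)

lemma partition_on_positions: "partition_on {1..length w} (positions w ` set w)"
proof (rule partition_onI)
  show "\<Union>(positions w ` set w) = {1..length w}"
  proof (intro equalityI subsetI)
    fix p assume "p \<in> {1..length w}"
    then have "p \<in> positions w (w ! (p - 1))" "w ! (p - 1) \<in> set w"
      by (auto simp: positions_def)
    then show "p \<in> \<Union>(positions w ` set w)"
      by blast
  qed (use positions_subset in blast)
  show "disjnt B B'" if B: "B \<in> positions w ` set w" "B' \<in> positions w ` set w" and ne: "B \<noteq> B'" for B B'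
  proof -
    obtain a b where "B = positions w a" "B' = positions w b"
      using B by blast
    then show ?thesis
      using ne positions_disjoint[of a b w] by (auto simp: disjnt_def)
  qed
  show "{} \<notin> positions w ` set w"
    using positions_nonempty by force
qed

definition frequent_blocks :: "nat \<Rightarrow> nat list \<Rightarrow> nat set list" where
  "frequent_blocks r w = map (positions w) (sorted_list_of_set {a \<in> set w. r \<le> count_list w a})"

definition rare_blocks :: "nat \<Rightarrow> nat list \<Rightarrow> nat set set" where
  "rare_blocks r w = positions w ` {a \<in> set w. count_list w a < r}"

lemma set_frequent_blocks: "set (frequent_blocks r w) = positions w ` {a \<in> set w. r \<le> count_list w a}"
  by (simp add: frequent_blocks_def)

lemma frequent_rare_blocks_Un: "set (frequent_blocks r w) \<union> rare_blocks r w = positions w ` set w"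
proof -
  have "{a \<in> set w. r \<le> count_list w a} \<union> {a \<in> set w. count_list w a < r} = set w"
    by auto
  then show ?thesis
    unfolding set_frequent_blocks rare_blocks_def image_Un[symmetric] by simp
qed

lemma r_set_composition_blocks: "r_set_composition r (length w) (frequent_blocks r w) (rare_blocks r w)"
  unfolding r_set_composition_def set_composition_def
proof (intro exI conjI)
  let ?A = "\<Union>(set (frequent_blocks r w))"
  have part: "partition_on {1..length w} (positions w ` set w)"
    by (rule partition_on_positions)
  have split: "positions w ` set w = set (frequent_blocks r w) \<union> rare_blocks r w"
    by (simp add: frequent_rare_blocks_Un)
  have disj: "set (frequent_blocks r w) \<inter> rare_blocks r w = {}"
    using inj_on_positions[of w] by (auto simp: set_frequent_blocks rare_blocks_def inj_on_eq_iff)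
  show "?A \<subseteq> {1..length w}"
    using positions_subset by (auto simp: set_frequent_blocks)
  show "distinct (frequent_blocks r w)"
    unfolding frequent_blocks_def
    by (rule distinct_map[THEN iffD2]) (auto intro: inj_on_subset[OF inj_on_positions])
  show "partition_on ?A (set (frequent_blocks r w))"
    by (rule partition_on_Union_subset[OF part]) (auto simp: split)
  show "\<forall>B\<in>set (frequent_blocks r w). r \<le> card B"
    by (auto simp: set_frequent_blocks card_positions)
  have "{1..length w} - ?A = \<Union>(rare_blocks r w)"
    using part disj unfolding split by (rule partition_on_Diff_Union)
  then show "partition_on ({1..length w} - ?A) (rare_blocks r w)"
    using partition_on_Union_subset[OF part] by (simp add: split)
  show "\<forall>B\<in>rare_blocks r w. card B < r"
    by (auto simp: rare_blocks_def card_positions)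
qed

lemma fits_blocks: "fits (length w) (frequent_blocks r w) (rare_blocks r w) w"
  unfolding fits_def
proof (intro conjI ballI allI impI refl)
  have blocks: "set (frequent_blocks r w) \<union> rare_blocks r w = positions w ` set w"
    by (rule frequent_rare_blocks_Un)
  fix j k assume j: "j \<in> {1..length w}" and k: "k \<in> {1..length w}"
  have "j \<in> positions w (w ! (j - 1))" "k \<in> positions w (w ! (k - 1))" "w ! (j - 1) \<in> set w"
    using j k by (auto simp: positions_def)
  then show "w ! (j - 1) = w ! (k - 1) \<longleftrightarrow>
      (\<exists>B\<in>set (frequent_blocks r w) \<union> rare_blocks r w. j \<in> B \<and> k \<in> B)"
    unfolding blocks by (auto simp: positions_def)
next
  fix l m j k
  assume "l < m \<and> m < length (frequent_blocks r w) \<and> j \<in> frequent_blocks r w ! l \<and> k \<in> frequent_blocks r w ! m"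
  moreover define s where "s = sorted_list_of_set {a \<in> set w. r \<le> count_list w a}"
  ultimately have "l < m" "m < length s" "w ! (j - 1) = s ! l" "w ! (k - 1) = s ! m"
    by (auto simp: frequent_blocks_def positions_def)
  moreover have "sorted_wrt (<) s"
    by (simp add: s_def)
  ultimately show "w ! (j - 1) < w ! (k - 1)"
    by (simp add: sorted_wrt_iff_nth_less)
qed

lemma M_r_invariant:
  assumes rsc: "r_set_composition r n Phi P"
  shows "M n Phi P \<in> r_invariant r"
proof -
  have part: "partition_on {1..n} (set Phi \<union> P)"
    by (rule r_set_composition_partition_on[OF rsc])
  have big: "\<forall>B\<in>set Phi. r \<le> card B"
    using rsc by (auto simp: r_set_composition_def)
  have "bounded_degree (M n Phi P)"
    unfolding bounded_degree_def M_def by (intro exI[of _ n]) (auto simp: fits_def)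
  moreover have "M n Phi P w = M n Phi P w'" if "r_equiv r w w'" for w w'
    using r_equiv_imp_fits[OF _ that part big] r_equiv_imp_fits[OF _ r_equiv_sym[OF that] part big]
    by (auto simp: M_def)
  ultimately show ?thesis
    by (simp add: r_invariant_def)
qed

lemma r_class_in_r_invariant: "r_class r w \<in> r_invariant r"
proof -
  have "bounded_degree (r_class r w)"
    unfolding bounded_degree_def r_class_def by (auto dest: r_equiv_length intro!: exI[of _ "length w"])
  moreover have "r_class r w x = r_class r w x'" if "r_equiv r x x'" for x x'
    using r_equiv_trans[of r w x x'] r_equiv_trans[of r w x' x] r_equiv_sym[OF that] that
    by (auto simp: r_class_def)
  ultimately show ?thesis
    by (simp add: r_invariant_def)
qed

lemma r_class_in_NCQSym_r_basis: "r_class r w \<in> {M n Phi P |n Phi P. r_set_composition r n Phi P}"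
proof -
  have "r_class r w = M (length w) (frequent_blocks r w) (rare_blocks r w)"
    by (rule M_eq_r_class[OF r_set_composition_blocks fits_blocks, symmetric])
  then show ?thesis
    using r_set_composition_blocks by blast
qed

lemma in_lin_span_indicators:
  fixes F :: "'a \<Rightarrow> rat"
  assumes "finite Bs" "Bs \<subseteq> G"
    and zero_one: "\<And>b x. b \<in> Bs \<Longrightarrow> b x = 0 \<or> b x = 1"
    and disjoint: "\<And>b b' x. b \<in> Bs \<Longrightarrow> b' \<in> Bs \<Longrightarrow> b x = 1 \<Longrightarrow> b' x = 1 \<Longrightarrow> b = b'"
    and const: "\<And>b x y. b \<in> Bs \<Longrightarrow> b x = 1 \<Longrightarrow> b y = 1 \<Longrightarrow> F x = F y"
    and support: "\<And>x. F x \<noteq> 0 \<Longrightarrow> \<exists>b\<in>Bs. b x = 1"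
  shows "F \<in> lin_span G"
proof -
  define c where "c b = F (SOME y. b y = 1)" for b :: "'a \<Rightarrow> rat"
  have "F x = (\<Sum>b\<in>Bs. c b * b x)" for x
  proof (cases "\<exists>b\<in>Bs. b x = 1")
    case True
    then obtain b0 where b0: "b0 \<in> Bs" "b0 x = 1"
      by blast
    have "b x = 0" if "b \<in> Bs - {b0}" for b
      using that zero_one disjoint[OF _ b0(1) _ b0(2)] by blast
    then have "(\<Sum>b\<in>Bs - {b0}. c b * b x) = 0"
      by (intro sum.neutral) simp
    then have "(\<Sum>b\<in>Bs. c b * b x) = c b0"
      using assms(1) b0 by (simp add: sum.remove)
    also have "c b0 = F x"
      unfolding c_def using const[OF b0(1) someI[of "\<lambda>y. b0 y = 1", OF b0(2)] b0(2)] .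
    finally show ?thesis ..
  next
    case False
    then have "b x = 0" if "b \<in> Bs" for b
      using zero_one that by blast
    then have "(\<Sum>b\<in>Bs. c b * b x) = 0"
      by (intro sum.neutral) simp
    moreover have "F x = 0"
      using support False by blast
    ultimately show ?thesis
      by simp
  qed
  then show ?thesis
    unfolding lin_span_def using assms(1,2) by blast
qed

lemma in_lin_span_classes:
  fixes F :: "'a \<Rightarrow> rat"
  assumes "finite K"
    and equiv: "equivp R"
    and classes: "\<And>k. k \<in> K \<Longrightarrow> (\<lambda>x. if R k x then 1 else 0) \<in> G"
    and invariant: "\<And>x y. R x y \<Longrightarrow> F x = F y"
    and support: "\<And>x. F x \<noteq> 0 \<Longrightarrow> \<exists>k\<in>K. R k x"
  shows "F \<in> lin_span G"
proof -
  define ind where "ind k = (\<lambda>x. if R k x then 1 else (0::rat))" for k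
  have ind_eq_1: "ind k x = 1 \<longleftrightarrow> R k x" for k x
    by (simp add: ind_def)
  have same_class: "ind k = ind k'" if "R k x" "R k' x" for k k' x
    using that equiv by (simp add: ind_def equivp_def)
  show ?thesis
  proof (rule in_lin_span_indicators[where Bs = "ind ` K"])
    show "finite (ind ` K)"
      using assms(1) by simp
    show "ind ` K \<subseteq> G"
      by (rule image_subsetI) (simp add: ind_def classes)
    show "b x = 0 \<or> b x = 1" if "b \<in> ind ` K" for b x
      using that unfolding ind_def by auto
    show "b = b'" if b: "b \<in> ind ` K" "b' \<in> ind ` K" and x: "b x = 1" "b' x = 1" for b b' x
    proof -
      obtain k k' where "b = ind k" "b' = ind k'"
        using b by blast
      then show ?thesis
        using x same_class[of k x k'] by (simp add: ind_eq_1)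
    qed
    show "F x = F y" if b: "b \<in> ind ` K" and xy: "b x = 1" "b y = 1" for b x y
    proof -
      obtain k where "b = ind k"
        using b by blast
      then have kx: "R k x" and ky: "R k y"
        using xy by (simp_all add: ind_eq_1)
      show ?thesis
        by (rule invariant[OF equivp_transp[OF equiv equivp_symp[OF equiv kx] ky]])
    qed
    show "\<exists>b\<in>ind ` K. b x = 1" if nonzero: "F x \<noteq> 0" for x
    proof -
      obtain k where "k \<in> K" "R k x"
        using support[OF nonzero] by blast
      then show ?thesis
        by (intro bexI[of _ "ind k"]) (simp_all add: ind_eq_1)
    qed
  qed
qed

lemma finite_packed_words: "finite {w :: nat list. set w \<subseteq> {..<d} \<and> length w \<le> d}"
  by (rule finite_lists_length_le) simp

lemma pack_in_packed_words: "length w \<le> d \<Longrightarrow> pack w \<in> {w. set w \<subseteq> {..<d} \<and> length w \<le> d}"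
  using set_pack_subset[of w] by auto

lemma r_invariant_subset_NCQSym_r: "r_invariant r \<subseteq> NCQSym_r r"
proof
  fix f assume f: "f \<in> r_invariant r"
  obtain d where d: "\<And>w. d < length w \<Longrightarrow> f w = 0"
    using f by (auto simp: r_invariant_def bounded_degree_def)
  show "f \<in> NCQSym_r r"
    unfolding NCQSym_r_def
  proof (rule in_lin_span_classes[where R = "r_equiv r" and K = "{w. set w \<subseteq> {..<d} \<and> length w \<le> d}"])
    show "(\<lambda>x. if r_equiv r k x then 1 else 0) \<in> {M n Phi P |n Phi P. r_set_composition r n Phi P}"
      for k :: "nat list"
      using r_class_in_NCQSym_r_basis[of r k] by (simp add: r_class_def)
    show "\<exists>k\<in>{w. set w \<subseteq> {..<d} \<and> length w \<le> d}. r_equiv r k x" if nonzero: "f x \<noteq> 0" for x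
    proof -
      have "length x \<le> d"
        using d[of x] nonzero by (meson not_le)
      then show ?thesis
        using pack_in_packed_words[of x d] r_equiv_sym[OF r_equiv_pack[of r x]] by blast
    qed
    show "f x = f y" if "r_equiv r x y" for x y
      using f that by (rule r_invariant_eq)
  qed (simp_all add: finite_packed_words equivp_r_equiv)
qed

lemma NCQSym_r_eq_r_invariant: "NCQSym_r r = r_invariant r"
proof
  show "NCQSym_r r \<subseteq> r_invariant r"
  proof
    fix f assume "f \<in> NCQSym_r r"
    then obtain S c where S: "finite S" "S \<subseteq> {M n Phi P |n Phi P. r_set_composition r n Phi P}"
      and f: "f = (\<lambda>x. \<Sum>b\<in>S. c b * b x)"
      unfolding NCQSym_r_def lin_span_def by blast
    have "S \<subseteq> r_invariant r"
      using S(2) M_r_invariant by blast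
    then show "f \<in> r_invariant r"
      unfolding f by (rule r_invariant_sum[OF S(1)])
  qed
qed (rule r_invariant_subset_NCQSym_r)

lemma r_invariant_subset_NCQSym: "r_invariant r \<subseteq> NCQSym"
proof
  fix f assume f: "f \<in> r_invariant r"
  have "f w = f w'" if "set_composition Phi {1..n}" "fits n Phi {} w" "fits n Phi {} w'" for n Phi w w'
  proof -
    have "partition_on {1..n} (set Phi \<union> {})"
      using that(1) by (simp add: set_composition_def)
    then show ?thesis
      using fits_imp_r_equiv[OF that(2,3)] r_invariant_eq[OF f] by simp
  qed
  moreover have "bounded_degree f"
    using f by (simp add: r_invariant_def)
  ultimately show "f \<in> NCQSym"
    unfolding NCQSym_def by blast
qed

lemma coprod_in_tensor_space:
  assumes f: "f \<in> r_invariant r"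
  shows "coprod f \<in> tensor_space (r_invariant r) (r_invariant r)"
proof -
  obtain d where d: "\<And>w. d < length w \<Longrightarrow> f w = 0"
    using f by (auto simp: r_invariant_def bounded_degree_def)
  let ?W = "{w :: nat list. set w \<subseteq> {..<d} \<and> length w \<le> d}"
  show ?thesis
    unfolding tensor_space_def
  proof (rule in_lin_span_classes[where R = "rel_prod (r_equiv r) (r_equiv r)" and K = "?W \<times> ?W"])
    show "(\<lambda>x. if rel_prod (r_equiv r) (r_equiv r) k x then 1 else 0)
        \<in> {tensor f g |f g. f \<in> r_invariant r \<and> g \<in> r_invariant r}" for k :: "nat list \<times> nat list"
    proof -
      have "(\<lambda>x. if rel_prod (r_equiv r) (r_equiv r) k x then 1 else 0) = tensor (r_class r (fst k)) (r_class r (snd k))"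
        by (auto simp: tensor_def r_class_def rel_prod_sel)
      then show ?thesis
        using r_class_in_r_invariant by blast
    qed
    show "\<exists>k\<in>?W \<times> ?W. rel_prod (r_equiv r) (r_equiv r) k x" if "coprod f x \<noteq> 0" for x
    proof -
      obtain u v where x: "x = (u, v)"
        by fastforce
      have "\<not> d < length u + length v"
      proof
        assume long: "d < length u + length v"
        have "coprod f x = 0"
          using coprod_eq_0_if_long[OF d long] by (simp add: x)
        with that show False
          by contradiction
      qed
      then have "length u \<le> d" "length v \<le> d"
        by simp_all
      then have "(pack u, pack v) \<in> ?W \<times> ?W"
        using pack_in_packed_words[of u d] pack_in_packed_words[of v d] by simp
      moreover have "rel_prod (r_equiv r) (r_equiv r) (pack u, pack v) x"
        using r_equiv_sym[OF r_equiv_pack[of r u]] r_equiv_sym[OF r_equiv_pack[of r v]] by (simp add: x)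
      ultimately show ?thesis
        by blast
    qed
    show "coprod f x = coprod f y" if "rel_prod (r_equiv r) (r_equiv r) x y" for x y
    proof -
      obtain x1 x2 y1 y2 where "x = (x1, x2)" "y = (y1, y2)"
        by fastforce
      then show ?thesis
        using that coprod_r_equiv[OF f, of x1 y1 x2 y2] by simp
    qed
  qed (simp_all add: finite_packed_words prod_equivp equivp_r_equiv)
qed

lemma sone_eq_r_class_Nil: "sone = r_class r []"
  by (auto simp: sone_def r_class_def r_equiv_Nil_iff)

theorem mainTheorem3:
  fixes r :: nat
  assumes "0 < r"
  shows "NCQSym_r r \<subseteq> NCQSym
    \<and> (\<lambda>w. 0) \<in> NCQSym_r r
    \<and> (\<forall>f\<in>NCQSym_r r. \<forall>g\<in>NCQSym_r r. \<forall>c::rat. (\<lambda>w. c * f w + g w) \<in> NCQSym_r r)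
    \<and> sone \<in> NCQSym_r r
    \<and> (\<forall>f\<in>NCQSym_r r. \<forall>g\<in>NCQSym_r r. smult f g \<in> NCQSym_r r)
    \<and> (\<forall>f\<in>NCQSym_r r. coprod f \<in> tensor_space (NCQSym_r r) (NCQSym_r r))
    \<and> (\<exists>S. is_antipode_on (NCQSym_r r) S)"
proof -
  have "sone \<in> r_invariant r"
    unfolding sone_eq_r_class_Nil[of r] by (rule r_class_in_r_invariant)
  moreover have "is_antipode_on (r_invariant r) antipode_l"
    by (rule is_antipode_on_antipode_l[OF r_invariant_antipode_l])
  ultimately show ?thesis
    unfolding NCQSym_r_eq_r_invariant
    by (intro conjI ballI allI exI r_invariant_subset_NCQSym r_invariant_zero r_invariant_lincomb
        r_invariant_smult coprod_in_tensor_space)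
qed

end
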